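(* Let $m\in\mathbb{N}$. Then there is a bijection between the $m+m$ non-inclusive sum-and-distance systems and the $2m\times 2m$ principal reversible squares, and there is a bijection between the $m+m$ inclusive sum-and-distance systems and the $(2m+1)\times(2m+1)$ principal reversible squares.
   Context: Let $m\in\mathbb{N}$ and positive integers $a_1<\dots<a_m$, $b_1<\dots<b_m$. The pair $\{\{a_1,\dots,a_m\},\{b_1,\dots,b_m\}\}$ is an $m+m$ non-inclusive sum-and-distance system if $\{a_j+b_k,\ |a_j-b_k| : j,k\in\{1,\dots,m\}\}=\{1,3,5,\dots,4m^2-1\}$, and an $m+m$ inclusive sum-and-distance system if $\{a_j,\ b_k,\ a_j+b_k,\ |a_j-b_k| : j,k\in\{1,\dots,m\}\}=\{1,2,\dots,2m(m+1)\}$. For $n\in\mathbb{N}$, a reversible square matrix is a real matrix $M=(M_{i,j})$ with indices $i,j\in\mathbb{Z}_n=\mathbb{Z}/n\mathbb{Z}$ (top-left entry index $(1,1)$, indices computed modulo $n$) such that (R) $M_{i,j}+M_{i,n+1-j}=M_{i,k}+M_{i,n+1-k}$ and $M_{i,j}+M_{n+1-i,j}=M_{k,j}+M_{n+1-k,j}$ for all $i,j,k$, and (V) $M_{i,j}+M_{k,l}=M_{i,l}+M_{k,j}$ for all $i,j,k,l$. An $n\times n$ principal reversible square is a reversible square matrix whose set of entries is exactly $\{1,\dots,n^2\}$, whose entries increase along each row and each column, and with $M_{1,1}=1$, $M_{1,2}=2$. *)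

theory Defs
  imports Complex_Main
begin

definition non_incl_sds :: "nat \<Rightarrow> int set set \<Rightarrow> bool" where
  "non_incl_sds m S \<longleftrightarrow>
     (\<exists>A B. S = {A, B} \<and> finite A \<and> finite B \<and> card A = m \<and> card B = m \<and>
        (\<forall>a\<in>A. a > 0) \<and> (\<forall>b\<in>B. b > 0) \<and>
        {a + b | a b. a \<in> A \<and> b \<in> B} \<union> {\<bar>a - b\<bar> | a b. a \<in> A \<and> b \<in> B}
          = {k. odd k \<and> 1 \<le> k \<and> k \<le> 4 * int m ^ 2 - 1})"

definition incl_sds :: "nat \<Rightarrow> int set set \<Rightarrow> bool" where
  "incl_sds m S \<longleftrightarrow>
     (\<exists>A B. S = {A, B} \<and> finite A \<and> finite B \<and> card A = m \<and> card B = m \<and>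
        (\<forall>a\<in>A. a > 0) \<and> (\<forall>b\<in>B. b > 0) \<and>
        A \<union> B \<union> {a + b | a b. a \<in> A \<and> b \<in> B} \<union> {\<bar>a - b\<bar> | a b. a \<in> A \<and> b \<in> B}
          = {1 .. 2 * int m * (int m + 1)})"

text \<open>n x n real matrices are functions nat => nat => real; the relevant entries
  are those with indices in {1..n} (index n+1-j stays in {1..n}, so no reduction
  mod n is needed).\<close>

definition reversible_square :: "nat \<Rightarrow> (nat \<Rightarrow> nat \<Rightarrow> real) \<Rightarrow> bool" where
  "reversible_square n M \<longleftrightarrow>
     (\<forall>i\<in>{1..n}. \<forall>j\<in>{1..n}. \<forall>k\<in>{1..n}.
        M i j + M i (n + 1 - j) = M i k + M i (n + 1 - k) \<and>
        M i j + M (n + 1 - i) j = M k j + M (n + 1 - k) j) \<and>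
     (\<forall>i\<in>{1..n}. \<forall>j\<in>{1..n}. \<forall>k\<in>{1..n}. \<forall>l\<in>{1..n}.
        M i j + M k l = M i l + M k j)"

text \<open>Principal reversible square; to make matrices canonical objects, entries
  outside {1..n} x {1..n} are required to be 0.\<close>

definition principal_reversible_square :: "nat \<Rightarrow> (nat \<Rightarrow> nat \<Rightarrow> real) \<Rightarrow> bool" where
  "principal_reversible_square n M \<longleftrightarrow>
     reversible_square n M \<and>
     (\<forall>i j. (i \<notin> {1..n} \<or> j \<notin> {1..n}) \<longrightarrow> M i j = 0) \<and>
     {M i j | i j. i \<in> {1..n} \<and> j \<in> {1..n}} = real ` {1 .. n ^ 2} \<and>
     (\<forall>i\<in>{1..n}. \<forall>j. 1 \<le> j \<and> j < n \<longrightarrow> M i j < M i (j + 1)) \<and>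
     (\<forall>j\<in>{1..n}. \<forall>i. 1 \<le> i \<and> i < n \<longrightarrow> M i j < M (i + 1) j) \<and>
     M 1 1 = 1 \<and> M 1 2 = 2"

end

theory Submission
  imports Defs "HOL-Library.Set_Algebras"
begin

(* Conditions (V) and (R) say that a reversible square is additive, M i j = c + s (x i + y j), with
   antipalindromic sequences x and y, i.e. x (n + 1 - i) = - x i.  In a principal square rows and
   columns increase, so x and y are strictly increasing, and such a sequence is determined by the
   set A of its n div 2 positive values: its values are +-A, together with 0 when n is odd.  As the
   sumset of +-A and +-B consists of the sums and distances of A and B with both signs, the entries
   of M are 1..n^2 exactly when c = (n^2 + 1)/2 and {A, B} is a sum-and-distance system: a
   non-inclusive one for n = 2m (with s = 1/2), an inclusive one for n = 2m + 1 (with s = 1; the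
   zeros of x and y contribute A and B themselves).  The pair {A, B} is read off from the first column and row of M,
   and the normalisation M 1 2 = 2 decides which of A and B indexes the rows. *)

lemma strict_mono_on_atLeastAtMost_iff:
  fixes f :: "nat \<Rightarrow> 'a::order"
  shows "strict_mono_on {a..b} f \<longleftrightarrow> (\<forall>j. a \<le> j \<and> j < b \<longrightarrow> f j < f (j + 1))"
proof
  assume "strict_mono_on {a..b} f"
  then show "\<forall>j. a \<le> j \<and> j < b \<longrightarrow> f j < f (j + 1)"
    by (auto intro: strict_mono_onD)
next
  assume step: "\<forall>j. a \<le> j \<and> j < b \<longrightarrow> f j < f (j + 1)"
  have chain: "f i < f (i + d + 1)" if "a \<le> i" "i + d < b" for i d
    using that
  proof (induction d)
    case (Suc d)
    then have "f i < f (i + d + 1)" by simp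
    also have "\<dots> < f (i + Suc d + 1)" using step Suc.prems by simp
    finally show ?case .
  qed (use step in simp)
  show "strict_mono_on {a..b} f"
  proof (rule strict_mono_onI)
    fix r t assume "r \<in> {a..b}" "t \<in> {a..b}" "r < t"
    then have "f r < f (r + (t - r - 1) + 1)" by (intro chain) auto
    then show "f r < f t" using \<open>r < t\<close> by simp
  qed
qed

lemma card_strict_mono_on_less:
  fixes f :: "nat \<Rightarrow> 'a::linorder"
  assumes "strict_mono_on {1..n} f" "i \<in> {1..n}"
  shows "card {v \<in> f ` {1..n}. v < f i} = i - 1"
proof -
  have "{v \<in> f ` {1..n}. v < f i} = f ` {1..<i}"
    using assms by (auto simp: strict_mono_on_less)
  moreover have "inj_on f {1..<i}"
    using assms(2) by (intro inj_on_subset[OF strict_mono_on_imp_inj_on[OF assms(1)]]) auto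
  ultimately show ?thesis by (simp add: card_image)
qed

lemma strict_mono_on_image_unique:
  fixes f g :: "nat \<Rightarrow> 'a::linorder"
  assumes "strict_mono_on {1..n} f" "strict_mono_on {1..n} g"
    and "f ` {1..n} = g ` {1..n}" "i \<in> {1..n}"
  shows "f i = g i"
proof -
  obtain j where j: "j \<in> {1..n}" "f i = g j"
    using assms(3,4) by (metis image_eqI imageE)
  have "i - 1 = j - 1"
    using card_strict_mono_on_less[OF assms(1,4)] card_strict_mono_on_less[OF assms(2) j(1)]
    by (metis assms(3) j(2))
  then have "i = j" using assms(4) j(1) by auto
  with j(2) show ?thesis by simp
qed

lemma image_reflect_atLeastAtMost: "(\<lambda>i. n + 1 - i) ` {1..n} = {1..n::nat}"
proof
  show "(\<lambda>i. n + 1 - i) ` {1..n} \<subseteq> {1..n}" by auto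
  show "{1..n} \<subseteq> (\<lambda>i. n + 1 - i) ` {1..n}"
  proof
    fix k assume "k \<in> {1..n}"
    then show "k \<in> (\<lambda>i. n + 1 - i) ` {1..n}" by (intro image_eqI[of _ _ "n + 1 - k"]) auto
  qed
qed

definition plus_minus :: "'a::uminus set \<Rightarrow> 'a set" where
  "plus_minus A = A \<union> uminus ` A"

lemma plus_minus_iff: "u \<in> plus_minus A \<longleftrightarrow> (\<exists>a\<in>A. u = a \<or> u = - a)"
  unfolding plus_minus_def by auto

lemma uminus_image_eqI:
  fixes X :: "'a::group_add set"
  assumes "\<And>v. v \<in> X \<Longrightarrow> - v \<in> X"
  shows "uminus ` X = X"
proof
  show sub: "uminus ` X \<subseteq> X" using assms by auto
  have "uminus ` uminus ` X \<subseteq> uminus ` X" using image_mono[OF sub] .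
  then show "X \<subseteq> uminus ` X" by (simp add: image_image)
qed

lemma positive_part_plus_minus:
  fixes A :: "'a::linordered_ab_group_add set"
  assumes "\<forall>a\<in>A. 0 \<le> a" "Z \<subseteq> {0}"
  shows "{v \<in> plus_minus A \<union> Z. 0 < v} = {a \<in> A. 0 < a}"
  using assms by (force simp: plus_minus_def)

lemma plus_minus_cancel:
  fixes A B :: "'a::linordered_ab_group_add set"
  assumes "\<forall>a\<in>A. 0 < a" "\<forall>b\<in>B. 0 < b" "Z \<subseteq> {0}" "plus_minus A \<union> Z = plus_minus B \<union> Z"
  shows "A = B"
proof -
  have "A = {v \<in> plus_minus A \<union> Z. 0 < v}" "B = {v \<in> plus_minus B \<union> Z. 0 < v}"
    using positive_part_plus_minus[of A Z] positive_part_plus_minus[of B Z] assms(1-3)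
    by (auto simp: less_imp_le)
  then show ?thesis using assms(4) by simp
qed

lemma card_plus_minus:
  fixes A :: "'a::linordered_ab_group_add set"
  assumes "finite A" "\<forall>a\<in>A. 0 < a"
  shows "card (plus_minus A) = 2 * card A"
proof -
  have "A \<inter> uminus ` A = {}"
    using assms(2) by (auto simp: image_iff) (metis less_asym neg_0_less_iff_less)
  moreover have "card (uminus ` A) = card A" by (simp add: card_image)
  ultimately show ?thesis
    unfolding plus_minus_def using assms(1) by (simp add: card_Un_disjoint)
qed

lemma symmetric_set_eq_plus_minus:
  fixes X :: "'a::linordered_ab_group_add set"
  assumes "uminus ` X = X"
  shows "X = plus_minus {v \<in> X. 0 < v} \<union> (X \<inter> {0})"
proof -
  have neg: "- v \<in> X" if "v \<in> X" for v using assms that by force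
  have "v \<in> plus_minus {v \<in> X. 0 < v}" if "v \<in> X" "v < 0" for v
    using neg[OF that(1)] that(2) unfolding plus_minus_def
    by (auto intro: image_eqI[of v uminus "- v"])
  moreover have "plus_minus {v \<in> X. 0 < v} \<subseteq> X"
    using neg unfolding plus_minus_def by auto
  ultimately show ?thesis
    unfolding plus_minus_def by (fastforce simp: linorder_neq_iff)
qed

definition sums_and_distances :: "'a::linordered_idom set \<Rightarrow> 'a set \<Rightarrow> 'a set" where
  "sums_and_distances A B = {a + b | a b. a \<in> A \<and> b \<in> B} \<union> {\<bar>a - b\<bar> | a b. a \<in> A \<and> b \<in> B}"

lemma sums_and_distances_nonneg:
  assumes "\<forall>a\<in>A. 0 < a" "\<forall>b\<in>B. 0 < b"
  shows "\<forall>v\<in>sums_and_distances A B. 0 \<le> v"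
  using assms unfolding sums_and_distances_def by force

lemma set_plus_plus_minus:
  fixes A B :: "'a::linordered_idom set"
  shows "plus_minus A + plus_minus B = plus_minus (sums_and_distances A B)"
proof
  show "plus_minus A + plus_minus B \<subseteq> plus_minus (sums_and_distances A B)"
  proof
    fix w assume "w \<in> plus_minus A + plus_minus B"
    then obtain u v where "u \<in> plus_minus A" "v \<in> plus_minus B" "w = u + v"
      by (auto elim: set_plus_elim)
    then obtain a b where ab: "a \<in> A" "b \<in> B"
      and uv: "u = a \<or> u = - a" "v = b \<or> v = - b" "w = u + v"
      unfolding plus_minus_iff by blast
    have sum: "a + b \<in> sums_and_distances A B" and dist: "\<bar>a - b\<bar> \<in> sums_and_distances A B"
      using ab unfolding sums_and_distances_def by blast+
    have "a + b \<in> plus_minus (sums_and_distances A B)" "- a - b \<in> plus_minus (sums_and_distances A B)"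
      using sum unfolding plus_minus_iff by (auto intro!: bexI[of _ "a + b"])
    moreover have "a - b \<in> plus_minus (sums_and_distances A B)" "b - a \<in> plus_minus (sums_and_distances A B)"
      using dist unfolding plus_minus_iff by (auto intro!: bexI[of _ "\<bar>a - b\<bar>"] simp: abs_if)
    ultimately show "w \<in> plus_minus (sums_and_distances A B)" using uv by auto
  qed
  show "plus_minus (sums_and_distances A B) \<subseteq> plus_minus A + plus_minus B"
  proof
    fix w assume "w \<in> plus_minus (sums_and_distances A B)"
    then obtain a b where ab: "a \<in> A" "b \<in> B"
      and "w = a + b \<or> w = - (a + b) \<or> w = \<bar>a - b\<bar> \<or> w = - \<bar>a - b\<bar>"
      unfolding plus_minus_iff sums_and_distances_def by blast
    then have "w = a + b \<or> w = (- a) + (- b) \<or> w = a + (- b) \<or> w = (- a) + b"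
      by (auto simp: abs_if)
    moreover have "a \<in> plus_minus A" "- a \<in> plus_minus A" "b \<in> plus_minus B" "- b \<in> plus_minus B"
      using ab unfolding plus_minus_iff by auto
    ultimately show "w \<in> plus_minus A + plus_minus B" by (metis set_plus_intro)
  qed
qed

lemma set_plus_plus_minus_zero:
  fixes A B :: "'a::linordered_idom set"
  shows "(plus_minus A \<union> {0}) + (plus_minus B \<union> {0}) =
    plus_minus (A \<union> B \<union> sums_and_distances A B) \<union> {0}"
proof -
  have "(plus_minus A \<union> {0}) + (plus_minus B \<union> {0}) =
      (plus_minus A + plus_minus B) \<union> plus_minus A \<union> plus_minus B \<union> {0}"
    unfolding Un_set_plus set_plus_Un set_add_0 set_add_0_right by blast
  then show ?thesis
    unfolding set_plus_plus_minus by (auto simp: plus_minus_def)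
qed

lemma inj_on_plus_if_card:
  fixes X Y :: "'a::ab_semigroup_add set"
  assumes "finite X" "finite Y" "card (X + Y) = card X * card Y"
  shows "inj_on (\<lambda>(u, v). u + v) (X \<times> Y)"
  using assms by (simp add: set_plus_image inj_on_iff_eq_card card_cartesian_product)

section \<open>Antipalindromic sequences\<close>

definition antipalindromic :: "nat \<Rightarrow> (nat \<Rightarrow> 'a::group_add) \<Rightarrow> bool" where
  "antipalindromic n x \<longleftrightarrow> (\<forall>i\<in>{1..n}. x (n + 1 - i) = - x i)"

definition signed_set :: "nat \<Rightarrow> int set \<Rightarrow> int set" where
  "signed_set n A = plus_minus A \<union> (if odd n then {0} else {})"

definition positive_values :: "nat \<Rightarrow> (nat \<Rightarrow> int) \<Rightarrow> int set" where
  "positive_values n x = {v \<in> x ` {1..n}. 0 < v}"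

lemma positive_values_signed_set:
  assumes "\<forall>a\<in>A. 0 < a"
  shows "{v \<in> signed_set n A. 0 < v} = A"
proof -
  have "{v \<in> signed_set n A. 0 < v} = {a \<in> A. 0 < a}"
    unfolding signed_set_def using assms by (intro positive_part_plus_minus) auto
  then show ?thesis using assms by auto
qed

lemma card_signed_set:
  assumes "finite A" "\<forall>a\<in>A. 0 < a"
  shows "card (signed_set n A) = 2 * card A + (if odd n then 1 else 0)"
proof -
  have "0 \<notin> plus_minus A" using assms(2) by (auto simp: plus_minus_def)
  moreover have "finite (plus_minus A)" using assms(1) by (simp add: plus_minus_def)
  ultimately show ?thesis
    using card_plus_minus[OF assms] by (auto simp: signed_set_def)
qed

lemma antipalindromic_image:
  assumes "antipalindromic n x"
  shows "uminus ` x ` {1..n} = x ` {1..n}"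
proof -
  have "- v \<in> x ` {1..n}" if "v \<in> x ` {1..n}" for v
  proof -
    obtain i where i: "i \<in> {1..n}" "v = x i" using \<open>v \<in> x ` {1..n}\<close> by blast
    then have "n + 1 - i \<in> {1..n}" "x (n + 1 - i) = - v"
      using assms unfolding antipalindromic_def by auto
    then show ?thesis by (metis image_eqI)
  qed
  then show ?thesis by (rule uminus_image_eqI)
qed

lemma antipalindromic_middle:
  fixes x :: "nat \<Rightarrow> int"
  assumes "antipalindromic n x" "odd n"
  shows "x (n div 2 + 1) = 0"
proof -
  have "n div 2 + 1 \<in> {1..n}" "n + 1 - (n div 2 + 1) = n div 2 + 1"
    using assms(2) by (auto elim: oddE)
  then show ?thesis using assms(1) unfolding antipalindromic_def by force
qed

lemma zero_in_antipalindromic_image_iff: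
  fixes x :: "nat \<Rightarrow> int"
  assumes "strict_mono_on {1..n} x" "antipalindromic n x"
  shows "0 \<in> x ` {1..n} \<longleftrightarrow> odd n"
proof
  assume "0 \<in> x ` {1..n}"
  then obtain i where i: "i \<in> {1..n}" "x i = 0" by auto
  then have "n + 1 - i \<in> {1..n}" "x (n + 1 - i) = x i"
    using assms(2) unfolding antipalindromic_def by auto
  then have "i = n + 1 - i" using strict_mono_on_eqD[OF assms(1)] i(1) by blast
  then show "odd n" by presburger
next
  assume "odd n"
  then have "n div 2 + 1 \<in> {1..n}" by (auto elim: oddE)
  then show "0 \<in> x ` {1..n}"
    using antipalindromic_middle[OF assms(2) \<open>odd n\<close>] by (metis image_eqI)
qed

lemma antipalindromic_image_eq_signed_set:
  assumes "strict_mono_on {1..n} x" "antipalindromic n x"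
  shows "x ` {1..n} = signed_set n (positive_values n x)"
proof -
  have "x ` {1..n} \<inter> {0} = (if odd n then {0} else {})"
    using zero_in_antipalindromic_image_iff[OF assms] by auto
  then show ?thesis
    using symmetric_set_eq_plus_minus[OF antipalindromic_image[OF assms(2)]]
    unfolding signed_set_def positive_values_def by simp
qed

lemma card_positive_values:
  assumes "strict_mono_on {1..n} x" "antipalindromic n x"
  shows "card (positive_values n x) = n div 2"
proof -
  have "finite (positive_values n x)" "\<forall>a\<in>positive_values n x. 0 < a"
    unfolding positive_values_def by auto
  then have "card (x ` {1..n}) = 2 * card (positive_values n x) + (if odd n then 1 else 0)"
    by (simp only: antipalindromic_image_eq_signed_set[OF assms] card_signed_set)
  moreover have "card (x ` {1..n}) = n"
    using strict_mono_on_imp_inj_on[OF assms(1)] by (simp add: card_image)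
  ultimately show ?thesis by presburger
qed

lemma positive_values_cong:
  assumes "\<forall>i\<in>{1..n}. x i = x' i"
  shows "positive_values n x = positive_values n x'"
proof -
  have "x ` {1..n} = x' ` {1..n}" using assms by (intro image_cong) auto
  then show ?thesis unfolding positive_values_def by simp
qed

lemma antipalindromic_unique:
  assumes "strict_mono_on {1..n} x" "antipalindromic n x"
    and "strict_mono_on {1..n} x'" "antipalindromic n x'"
    and "positive_values n x = positive_values n x'" "i \<in> {1..n}"
  shows "x i = x' i"
proof -
  have "x ` {1..n} = x' ` {1..n}"
    using assms(5) by (simp only: antipalindromic_image_eq_signed_set[OF assms(1,2)]
        antipalindromic_image_eq_signed_set[OF assms(3,4)])
  then show ?thesis using strict_mono_on_image_unique assms(1,3,6) by blast
qed

lemma exists_antipalindromic: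
  assumes "finite A" "card A = n div 2" "\<forall>a\<in>A. 0 < a"
  obtains x where "strict_mono_on {1..n} x" "antipalindromic n x" "positive_values n x = A"
proof -
  let ?X = "signed_set n A"
  define L where "L = sorted_list_of_set ?X"
  have "card ?X = n" using card_signed_set[OF assms(1,3), of n] assms(2) by presburger
  moreover have "finite ?X" using assms(1) by (simp add: signed_set_def plus_minus_def)
  ultimately have L: "length L = n" "sorted_wrt (<) L" "set L = ?X"
    unfolding L_def by auto
  define x where "x i = L ! (i - 1)" for i
  have strict: "strict_mono_on {1..n} x"
    using L(1,2) unfolding x_def sorted_wrt_iff_nth_less
    by (intro strict_mono_onI) auto
  have image: "x ` {1..n} = ?X"
  proof -
    have "(\<lambda>i. i - 1) ` {1..n} = {..<n}"
      by (auto simp: image_iff intro!: bexI[of _ "Suc _"])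
    then have "x ` {1..n} = (\<lambda>k. L ! k) ` {..<n}" unfolding x_def by (metis image_image)
    also have "\<dots> = set L" using L(1) by (auto simp: in_set_conv_nth)
    finally show ?thesis using L(3) by simp
  qed
  have "uminus ` ?X = ?X"
    by (intro uminus_image_eqI) (auto simp: signed_set_def plus_minus_def)
  \<comment> \<open>\<open>i \<mapsto> - x (n + 1 - i)\<close> enumerates the symmetric set \<open>?X\<close> increasingly as well\<close>
  have "x i = - x (n + 1 - i)" if "i \<in> {1..n}" for i
  proof (rule strict_mono_on_image_unique[OF strict _ _ that])
    show "strict_mono_on {1..n} (\<lambda>i. - x (n + 1 - i))"
      by (intro strict_mono_onI) (auto intro!: strict_mono_onD[OF strict])
    show "x ` {1..n} = (\<lambda>i. - x (n + 1 - i)) ` {1..n}"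
      using image_reflect_atLeastAtMost[of n] \<open>uminus ` ?X = ?X\<close> image by (metis image_image)
  qed
  then have "antipalindromic n x" unfolding antipalindromic_def by force
  moreover have "positive_values n x = A"
    unfolding positive_values_def image using positive_values_signed_set[OF assms(3)] .
  ultimately show ?thesis using strict that by blast
qed

definition square_entries :: "nat \<Rightarrow> (nat \<Rightarrow> nat \<Rightarrow> real) \<Rightarrow> real set" where
  "square_entries n M = {M i j | i j. i \<in> {1..n} \<and> j \<in> {1..n}}"

definition increasing_square :: "nat \<Rightarrow> (nat \<Rightarrow> nat \<Rightarrow> real) \<Rightarrow> bool" where
  "increasing_square n M \<longleftrightarrow>
     (\<forall>i\<in>{1..n}. strict_mono_on {1..n} (M i)) \<and> (\<forall>j\<in>{1..n}. strict_mono_on {1..n} (\<lambda>i. M i j))"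

lemma principal_reversible_square_iff:
  "principal_reversible_square n M \<longleftrightarrow>
     reversible_square n M \<and> (\<forall>i j. i \<notin> {1..n} \<or> j \<notin> {1..n} \<longrightarrow> M i j = 0) \<and>
     square_entries n M = real ` {1..n\<^sup>2} \<and> increasing_square n M \<and> M 1 1 = 1 \<and> M 1 2 = 2"
  unfolding principal_reversible_square_def square_entries_def increasing_square_def
    strict_mono_on_atLeastAtMost_iff
  by simp

lemma principal_reversible_squareD:
  assumes "principal_reversible_square n M"
  shows "reversible_square n M" "i \<notin> {1..n} \<or> j \<notin> {1..n} \<Longrightarrow> M i j = 0"
    and "square_entries n M = real ` {1..n\<^sup>2}" "increasing_square n M" "M 1 2 = 2"
  using assms unfolding principal_reversible_square_iff by simp_all

lemma square_entries_eq_image: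
  "square_entries n M = (\<lambda>(i, j). M i j) ` ({1..n} \<times> {1..n})"
  unfolding square_entries_def by force

lemma square_entriesD:
  assumes "square_entries n M = real ` {1..n\<^sup>2}"
  shows "i \<in> {1..n} \<Longrightarrow> j \<in> {1..n} \<Longrightarrow> \<exists>k\<in>{1..n\<^sup>2}. M i j = real k"
    and "k \<in> {1..n\<^sup>2} \<Longrightarrow> \<exists>i\<in>{1..n}. \<exists>j\<in>{1..n}. M i j = real k"
proof -
  show "\<exists>k\<in>{1..n\<^sup>2}. M i j = real k" if "i \<in> {1..n}" "j \<in> {1..n}"
    using assms that unfolding square_entries_def by blast
  show "\<exists>i\<in>{1..n}. \<exists>j\<in>{1..n}. M i j = real k" if "k \<in> {1..n\<^sup>2}"
  proof -
    have "real k \<in> square_entries n M" using assms that by simp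
    then show ?thesis unfolding square_entries_def by force
  qed
qed

lemma inj_on_square_entries:
  assumes "square_entries n M = real ` {1..n\<^sup>2}"
  shows "inj_on (\<lambda>(i, j). M i j) ({1..n} \<times> {1..n})"
proof (rule eq_card_imp_inj_on)
  have "(\<lambda>(i, j). M i j) ` ({1..n} \<times> {1..n}) = real ` {1..n\<^sup>2}"
    using assms unfolding square_entries_eq_image .
  then show "card ((\<lambda>(i, j). M i j) ` ({1..n} \<times> {1..n})) = card ({1..n} \<times> {1..n})"
    by (simp add: card_image power2_eq_square)
qed simp

lemma increasing_square_le:
  assumes "increasing_square n M"
    and "i \<in> {1..n}" "j \<in> {1..n}" "k \<in> {1..n}" "l \<in> {1..n}" "i \<le> k" "j \<le> l"
  shows "M i j \<le> M k l"
proof -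
  have "M i j \<le> M i l"
    using assms unfolding increasing_square_def by (blast intro: strict_mono_on_leD)
  also have "\<dots> \<le> M k l"
    using strict_mono_on_leD[of "{1..n}" "\<lambda>i. M i l" i k] assms
    unfolding increasing_square_def by simp
  finally show ?thesis .
qed

lemma increasing_square_corners:
  assumes "1 \<le> n" "square_entries n M = real ` {1..n\<^sup>2}" "increasing_square n M"
  shows "M 1 1 = 1" "M n n = n\<^sup>2"
proof -
  have corners: "1 \<in> {1..n}" "n \<in> {1..n}" using assms(1) by auto
  have targets: "1 \<in> {1..n\<^sup>2}" "n\<^sup>2 \<in> {1..n\<^sup>2}" using assms(1) by auto
  obtain i j where "i \<in> {1..n}" "j \<in> {1..n}" "M i j = 1"
    using square_entriesD(2)[OF assms(2) targets(1)] by auto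
  then have "M 1 1 \<le> 1" using increasing_square_le[OF assms(3) corners(1,1)] by force
  moreover have "M 1 1 \<ge> 1" using square_entriesD(1)[OF assms(2) corners(1,1)] by auto
  ultimately show "M 1 1 = 1" by simp
  obtain i j where "i \<in> {1..n}" "j \<in> {1..n}" "M i j = n\<^sup>2"
    using square_entriesD(2)[OF assms(2) targets(2)] by auto
  then have "M n n \<ge> n\<^sup>2" using increasing_square_le[OF assms(3) _ _ corners(2,2)] by force
  moreover have "M n n \<le> n\<^sup>2" using square_entriesD(1)[OF assms(2) corners(2,2)] by auto
  ultimately show "M n n = n\<^sup>2" by simp
qed

lemma increasing_square_entry_two:
  assumes "2 \<le> n" "square_entries n M = real ` {1..n\<^sup>2}" "increasing_square n M"
  shows "M 1 2 = 2 \<or> M 2 1 = 2"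
proof -
  have corners: "1 \<in> {1..n}" "2 \<in> {1..n}" using assms(1) by auto
  have "1 \<le> n" using assms(1) by simp
  then have "M 1 1 = 1" using increasing_square_corners(1) assms(2,3) by blast
  have two: "M i j = 2" if "i \<in> {1..n}" "j \<in> {1..n}" "M 1 1 < M i j" "M i j \<le> 2" for i j
    using square_entriesD(1)[OF assms(2) that(1,2)] that(3,4) \<open>M 1 1 = 1\<close> by auto
  have "2 \<le> n\<^sup>2" using assms(1) power_increasing[of 1 2 n] by simp
  then obtain i j where ij: "i \<in> {1..n}" "j \<in> {1..n}" "M i j = 2"
    using square_entriesD(2)[OF assms(2), of 2] by auto
  show ?thesis
  proof (cases "2 \<le> j")
    case True
    have "M 1 1 < M 1 2"
      using assms(3) corners strict_mono_onD[of "{1..n}" "M 1" 1 2]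
      unfolding increasing_square_def by simp
    moreover have "M 1 2 \<le> 2" using increasing_square_le[OF assms(3) corners ij(1,2)] ij True by auto
    ultimately show ?thesis using two[OF corners] by simp
  next
    case False
    then have "j = 1" using ij by auto
    then have "2 \<le> i" using ij \<open>M 1 1 = 1\<close> by (cases "i = 1") auto
    have "M 1 1 < M 2 1"
      using assms(3) corners strict_mono_onD[of "{1..n}" "\<lambda>i. M i 1" 1 2]
      unfolding increasing_square_def by simp
    moreover have "M 2 1 \<le> 2"
      using increasing_square_le[OF assms(3) corners(2,1) ij(1,2)] ij \<open>j = 1\<close> \<open>2 \<le> i\<close> by auto
    ultimately show ?thesis using two[OF corners(2,1)] by simp
  qed
qed

definition additive_square ::
    "nat \<Rightarrow> real \<Rightarrow> real \<Rightarrow> (nat \<Rightarrow> int) \<Rightarrow> (nat \<Rightarrow> int) \<Rightarrow> nat \<Rightarrow> nat \<Rightarrow> real" where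
  "additive_square n c s x y i j =
     (if i \<in> {1..n} \<and> j \<in> {1..n} then c + s * of_int (x i + y j) else 0)"

lemma additive_square_transpose:
  "additive_square n c s x y i j = additive_square n c s y x j i"
  unfolding additive_square_def by (simp add: add.commute)

lemma additive_square_cong:
  assumes "\<forall>i\<in>{1..n}. x i = x' i" "\<forall>j\<in>{1..n}. y j = y' j"
  shows "additive_square n c s x y = additive_square n c s x' y'"
  using assms by (intro ext) (simp add: additive_square_def)

lemma additive_square_eq:
  assumes "strict_mono_on {1..n} x" "antipalindromic n x" "strict_mono_on {1..n} x'" "antipalindromic n x'"
    and "strict_mono_on {1..n} y" "antipalindromic n y" "strict_mono_on {1..n} y'" "antipalindromic n y'"
    and "positive_values n x = positive_values n x'" "positive_values n y = positive_values n y'"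
  shows "additive_square n c s x y = additive_square n c s x' y'"
  using assms by (intro additive_square_cong ballI antipalindromic_unique)

lemma reversible_additive_square:
  assumes "antipalindromic n x" "antipalindromic n y"
  shows "reversible_square n (additive_square n c s x y)"
proof -
  have "n + 1 - i \<in> {1..n}" if "i \<in> {1..n}" for i using that by auto
  then show ?thesis
    using assms unfolding reversible_square_def antipalindromic_def additive_square_def
    by (simp add: algebra_simps)
qed

lemma square_entries_additive_square:
  "square_entries n (additive_square n c s x y) =
     (\<lambda>w. c + s * of_int w) ` (x ` {1..n} + y ` {1..n})"
proof -
  have sums: "x ` {1..n} + y ` {1..n} = (\<lambda>(i, j). x i + y j) ` ({1..n} \<times> {1..n})"
    unfolding set_plus_image by force
  show ?thesis
    unfolding square_entries_eq_image sums image_image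
    by (intro image_cong) (auto simp: additive_square_def)
qed

lemma increasing_additive_square:
  assumes "0 < s" "strict_mono_on {1..n} x" "strict_mono_on {1..n} y"
  shows "increasing_square n (additive_square n c s x y)"
proof -
  have row: "strict_mono_on {1..n} (additive_square n c s u v i)"
    if "strict_mono_on {1..n} v" "i \<in> {1..n}" for u v i
  proof (rule strict_mono_onI)
    fix j k assume jk: "j \<in> {1..n}" "k \<in> {1..n}" "j < k"
    then have "v j < v k" using strict_mono_onD[OF that(1)] by blast
    then show "additive_square n c s u v i j < additive_square n c s u v i k"
      using assms(1) that(2) jk by (simp add: additive_square_def)
  qed
  have "(\<lambda>i. additive_square n c s x y i j) = additive_square n c s y x j" for j
    by (rule ext) (rule additive_square_transpose)
  then show ?thesis
    unfolding increasing_square_def using row[OF assms(3)] row[OF assms(2)] by simp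
qed

lemma principal_additive_square:
  assumes "strict_mono_on {1..n} x" "antipalindromic n x"
    and "strict_mono_on {1..n} y" "antipalindromic n y"
    and "0 < s" "2 \<le> n"
    and entries: "(\<lambda>w. c + s * of_int w) ` (x ` {1..n} + y ` {1..n}) = real ` {1..n\<^sup>2}"
  shows "principal_reversible_square n (additive_square n c s x y) \<or>
    principal_reversible_square n (additive_square n c s y x)"
proof -
  have principal: "principal_reversible_square n (additive_square n c s u v)"
    if "strict_mono_on {1..n} u" "antipalindromic n u" "strict_mono_on {1..n} v" "antipalindromic n v"
      "square_entries n (additive_square n c s u v) = real ` {1..n\<^sup>2}"
      "additive_square n c s u v 1 2 = 2" for u v
  proof -
    note increasing = increasing_additive_square[OF \<open>0 < s\<close> that(1,3)]
    have "1 \<le> n" using \<open>2 \<le> n\<close> by simp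
    then have "additive_square n c s u v 1 1 = 1"
      using increasing_square_corners(1) that(5) increasing by blast
    moreover have "\<forall>i j. i \<notin> {1..n} \<or> j \<notin> {1..n} \<longrightarrow> additive_square n c s u v i j = 0"
      by (simp add: additive_square_def)
    ultimately show ?thesis
      using reversible_additive_square[OF that(2,4)] that(5,6) increasing
      unfolding principal_reversible_square_iff by blast
  qed
  have "square_entries n (additive_square n c s x y) = real ` {1..n\<^sup>2}"
    "square_entries n (additive_square n c s y x) = real ` {1..n\<^sup>2}"
    using entries by (simp_all add: square_entries_additive_square add.commute)
  moreover have "additive_square n c s x y 1 2 = 2 \<or> additive_square n c s y x 1 2 = 2"
    using increasing_square_entry_two[OF \<open>2 \<le> n\<close> calculation(1)
        increasing_additive_square[OF \<open>0 < s\<close> assms(1,3)]]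
    by (metis additive_square_transpose)
  ultimately show ?thesis using principal assms(1-4) by blast
qed

section \<open>Reversible squares are additive\<close>

lemma reversible_squareD:
  assumes "reversible_square n M" "i \<in> {1..n}" "j \<in> {1..n}" "k \<in> {1..n}"
  shows "M i j + M i (n + 1 - j) = M i k + M i (n + 1 - k)"
    and "M i j + M (n + 1 - i) j = M k j + M (n + 1 - k) j"
    and "l \<in> {1..n} \<Longrightarrow> M i j + M k l = M i l + M k j"
  using assms unfolding reversible_square_def by blast+

lemma reversible_square_eq_sum:
  assumes "reversible_square n M" "i \<in> {1..n}" "j \<in> {1..n}"
  shows "M i j = (M 1 1 + M n n) / 2 + (M i 1 - M (n + 1 - i) 1) / 2 + (M 1 j - M 1 (n + 1 - j)) / 2"
proof -
  have one: "1 \<in> {1..n}" and last: "n \<in> {1..n}" using assms(2) by auto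
  have "M i 1 + M (n + 1 - i) 1 = M 1 1 + M n 1"
    using reversible_squareD(2)[OF assms(1,2) one one] by simp
  moreover have "M 1 j + M 1 (n + 1 - j) = M 1 1 + M 1 n"
    using reversible_squareD(1)[OF assms(1) one assms(3) one] by simp
  moreover have "M i j + M 1 1 = M i 1 + M 1 j"
    using reversible_squareD(3)[OF assms(1-3) one one] .
  moreover have "M n n + M 1 1 = M n 1 + M 1 n"
    using reversible_squareD(3)[OF assms(1) last last one one] .
  ultimately show ?thesis by (simp add: field_simps)
qed

lemma reversible_square_odd_centre:
  assumes "reversible_square n M" "odd n" "i \<in> {1..n}" "j \<in> {1..n}"
  shows "M i j - M (n + 1 - i) j = 2 * (M i j - M (n div 2 + 1) j)"
    and "M j i - M j (n + 1 - i) = 2 * (M j i - M j (n div 2 + 1))"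
proof -
  have centre: "n div 2 + 1 \<in> {1..n}" "n + 1 - (n div 2 + 1) = n div 2 + 1"
    using assms(2) by (auto elim: oddE)
  show "M i j - M (n + 1 - i) j = 2 * (M i j - M (n div 2 + 1) j)"
    using reversible_squareD(2)[OF assms(1,3,4) centre(1)] centre(2) by simp
  show "M j i - M j (n + 1 - i) = 2 * (M j i - M j (n div 2 + 1))"
    using reversible_squareD(1)[OF assms(1,4,3) centre(1)] centre(2) by simp
qed

lemma principal_square_entry_integral:
  assumes "principal_reversible_square n M" "i \<in> {1..n}" "j \<in> {1..n}"
  shows "M i j \<in> \<int>"
proof -
  have "M i j \<in> real ` {1..n\<^sup>2}"
    using assms unfolding principal_reversible_square_def by blast
  then show ?thesis by auto
qed

(* The floor is exact wherever it is used: the argument is then an integer. *)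
definition scaled_odd_part :: "nat \<Rightarrow> real \<Rightarrow> (nat \<Rightarrow> real) \<Rightarrow> nat \<Rightarrow> int" where
  "scaled_odd_part n s v i = \<lfloor>(v i - v (n + 1 - i)) / (2 * s)\<rfloor>"

lemma of_int_scaled_odd_part:
  assumes "(v i - v (n + 1 - i)) / (2 * s) \<in> \<int>"
  shows "of_int (scaled_odd_part n s v i) = (v i - v (n + 1 - i)) / (2 * s)"
  using assms unfolding scaled_odd_part_def by (metis Ints_cases floor_of_int)

lemma scaled_odd_part_strict_mono_antipalindromic:
  assumes "strict_mono_on {1..n} v" "0 < s"
    and integral: "\<forall>i\<in>{1..n}. (v i - v (n + 1 - i)) / (2 * s) \<in> \<int>"
  shows "strict_mono_on {1..n} (scaled_odd_part n s v)" "antipalindromic n (scaled_odd_part n s v)"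
proof -
  let ?x = "scaled_odd_part n s v"
  have val: "real_of_int (?x i) = (v i - v (n + 1 - i)) / (2 * s)" if "i \<in> {1..n}" for i
    using integral that by (simp add: of_int_scaled_odd_part)
  show "strict_mono_on {1..n} ?x"
  proof (rule strict_mono_onI)
    fix i j assume ij: "i \<in> {1..n}" "j \<in> {1..n}" "i < j"
    then have "v i < v j" "v (n + 1 - j) < v (n + 1 - i)"
      using strict_mono_onD[OF assms(1)] by auto
    then have "real_of_int (?x i) < real_of_int (?x j)"
      using val[OF ij(1)] val[OF ij(2)] assms(2) by (simp add: divide_strict_right_mono)
    then show "?x i < ?x j" by simp
  qed
  have "real_of_int (?x (n + 1 - i)) = - real_of_int (?x i)" if "i \<in> {1..n}" for i
  proof -
    have "n + 1 - i \<in> {1..n}" "n + 1 - (n + 1 - i) = i" using that by auto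
    then have "real_of_int (?x (n + 1 - i)) = (v (n + 1 - i) - v i) / (2 * s)"
      using val[of "n + 1 - i"] by simp
    also have "\<dots> = - ((v i - v (n + 1 - i)) / (2 * s))"
      by (metis minus_diff_eq minus_divide_left)
    finally show ?thesis using val[OF that] by simp
  qed
  then show "antipalindromic n ?x" unfolding antipalindromic_def by (metis of_int_eq_iff of_int_minus)
qed

lemma principal_square_eq_additive_square:
  assumes "principal_reversible_square n M" "0 < s"
    and "\<forall>i\<in>{1..n}. (M i 1 - M (n + 1 - i) 1) / (2 * s) \<in> \<int>"
    and "\<forall>j\<in>{1..n}. (M 1 j - M 1 (n + 1 - j)) / (2 * s) \<in> \<int>"
    and "1 \<le> n"
  shows "M = additive_square n ((real (n\<^sup>2) + 1) / 2) s
               (scaled_odd_part n s (\<lambda>i. M i 1)) (scaled_odd_part n s (M 1))"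
proof (intro ext)
  fix i j
  note M = principal_reversible_squareD[OF assms(1)]
  show "M i j = additive_square n ((real (n\<^sup>2) + 1) / 2) s
                  (scaled_odd_part n s (\<lambda>i. M i 1)) (scaled_odd_part n s (M 1)) i j"
  proof (cases "i \<in> {1..n} \<and> j \<in> {1..n}")
    case True
    have "M 1 1 = 1" "M n n = n\<^sup>2"
      using increasing_square_corners \<open>1 \<le> n\<close> M(3,4) by blast+
    moreover have "real_of_int (scaled_odd_part n s (\<lambda>i. M i 1) i) = (M i 1 - M (n + 1 - i) 1) / (2 * s)"
      "real_of_int (scaled_odd_part n s (M 1) j) = (M 1 j - M 1 (n + 1 - j)) / (2 * s)"
      using True assms(3,4) by (simp_all add: of_int_scaled_odd_part)
    ultimately show ?thesis
      using True reversible_square_eq_sum[OF M(1), of i j] \<open>0 < s\<close>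
      by (simp add: additive_square_def field_simps)
  next
    case False
    then have "M i j = 0" using M(2) by blast
    with False show ?thesis by (auto simp: additive_square_def)
  qed
qed

lemma scaled_odd_part_additive_square:
  assumes "antipalindromic n x" "s \<noteq> 0" "i \<in> {1..n}"
  shows "scaled_odd_part n s (\<lambda>i. additive_square n c s x y i 1) i = x i"
proof -
  have "n + 1 - i \<in> {1..n}" "x (n + 1 - i) = - x i"
    using assms(1,3) unfolding antipalindromic_def by auto
  then have "(additive_square n c s x y i 1 - additive_square n c s x y (n + 1 - i) 1) / (2 * s) =
      real_of_int (x i)"
    using assms(2,3) by (simp add: additive_square_def field_simps)
  then show ?thesis unfolding scaled_odd_part_def by simp
qed

definition sds_of_square :: "nat \<Rightarrow> real \<Rightarrow> (nat \<Rightarrow> nat \<Rightarrow> real) \<Rightarrow> int set set" where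
  "sds_of_square n s M =
     {positive_values n (scaled_odd_part n s (\<lambda>i. M i 1)), positive_values n (scaled_odd_part n s (M 1))}"

lemma sds_of_additive_square:
  assumes "antipalindromic n x" "antipalindromic n y" "s \<noteq> 0"
  shows "sds_of_square n s (additive_square n c s x y) = {positive_values n x, positive_values n y}"
proof -
  have row: "additive_square n c s x y 1 = (\<lambda>j. additive_square n c s y x j 1)"
    by (rule ext) (rule additive_square_transpose)
  have col: "positive_values n (scaled_odd_part n s (\<lambda>i. additive_square n c s z w i 1)) =
      positive_values n z" if "antipalindromic n z" for z w
    using that assms(3) by (intro positive_values_cong ballI scaled_odd_part_additive_square)
  show ?thesis unfolding sds_of_square_def row col[OF assms(1)] col[OF assms(2)] ..
qed

section \<open>The correspondence for one parity\<close>

(* One parity of n: the scale s of the coordinates (1/2 for even n and 1 for odd n keep them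
   integral) and the sum-and-distance condition P.  The last assumption may use that all sums
   u + v are distinct, as the n^2 entries of a principal square are. *)
locale sds_square_correspondence =
  fixes n :: nat and s :: real and P :: "int set \<Rightarrow> int set \<Rightarrow> bool"
  assumes two_le: "2 \<le> n" and scale_pos: "0 < s"
    and integral: "\<And>M i. principal_reversible_square n M \<Longrightarrow> i \<in> {1..n} \<Longrightarrow>
      (M i 1 - M (n + 1 - i) 1) / (2 * s) \<in> \<int> \<and> (M 1 i - M 1 (n + 1 - i)) / (2 * s) \<in> \<int>"
    and entries_if_sds: "\<And>A B. \<forall>a\<in>A. 0 < a \<Longrightarrow> \<forall>b\<in>B. 0 < b \<Longrightarrow> P A B \<Longrightarrow>
      (\<lambda>w. (real (n\<^sup>2) + 1) / 2 + s * of_int w) ` (signed_set n A + signed_set n B) = real ` {1..n\<^sup>2}"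
    and sds_if_entries: "\<And>A B. \<forall>a\<in>A. 0 < a \<Longrightarrow> \<forall>b\<in>B. 0 < b \<Longrightarrow>
      (\<lambda>w. (real (n\<^sup>2) + 1) / 2 + s * of_int w) ` (signed_set n A + signed_set n B) = real ` {1..n\<^sup>2} \<Longrightarrow>
      inj_on (\<lambda>(u, v). u + v) (signed_set n A \<times> signed_set n B) \<Longrightarrow> P A B"
begin

abbreviation centre :: real where
  "centre \<equiv> (real (n\<^sup>2) + 1) / 2"

lemma principal_square_is_additive:
  assumes "principal_reversible_square n M"
  obtains x y where "strict_mono_on {1..n} x" "antipalindromic n x"
    and "strict_mono_on {1..n} y" "antipalindromic n y"
    and "M = additive_square n centre s x y"
proof
  have "1 \<in> {1..n}" using two_le by auto
  then have "strict_mono_on {1..n} (\<lambda>i. M i 1)" "strict_mono_on {1..n} (M 1)"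
    using principal_reversible_squareD(4)[OF assms] unfolding increasing_square_def by blast+
  then show "strict_mono_on {1..n} (scaled_odd_part n s (\<lambda>i. M i 1))"
    "antipalindromic n (scaled_odd_part n s (\<lambda>i. M i 1))"
    "strict_mono_on {1..n} (scaled_odd_part n s (M 1))"
    "antipalindromic n (scaled_odd_part n s (M 1))"
    using integral[OF assms] scale_pos
    by (blast intro: scaled_odd_part_strict_mono_antipalindromic)+
  show "M = additive_square n centre s
      (scaled_odd_part n s (\<lambda>i. M i 1)) (scaled_odd_part n s (M 1))"
    using integral[OF assms] scale_pos two_le
    by (intro principal_square_eq_additive_square assms) auto
qed

lemma inj_on_sds_of_square: "inj_on (sds_of_square n s) {M. principal_reversible_square n M}"
proof (rule inj_onI)
  fix M M'
  assume "M \<in> {M. principal_reversible_square n M}" "M' \<in> {M. principal_reversible_square n M}"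
    and eq: "sds_of_square n s M = sds_of_square n s M'"
  then have P: "principal_reversible_square n M" "principal_reversible_square n M'" by auto
  obtain x y where xy: "strict_mono_on {1..n} x" "antipalindromic n x"
      "strict_mono_on {1..n} y" "antipalindromic n y" "M = additive_square n centre s x y"
    using principal_square_is_additive[OF P(1)] .
  obtain x' y' where xy': "strict_mono_on {1..n} x'" "antipalindromic n x'"
      "strict_mono_on {1..n} y'" "antipalindromic n y'" "M' = additive_square n centre s x' y'"
    using principal_square_is_additive[OF P(2)] .
  have "{positive_values n x, positive_values n y} = {positive_values n x', positive_values n y'}"
    using eq scale_pos unfolding xy(5) xy'(5) by (simp add: sds_of_additive_square xy xy')
  then consider "positive_values n x = positive_values n x'" "positive_values n y = positive_values n y'"
    | "positive_values n x = positive_values n y'" "positive_values n y = positive_values n x'"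
    by (auto simp: doubleton_eq_iff)
  then show "M = M'"
  proof cases
    case 1
    then show ?thesis unfolding xy(5) xy'(5) using xy xy' by (intro additive_square_eq) auto
  next
    case 2
    then have "M = additive_square n centre s y' x'"
      unfolding xy(5) using xy xy' by (intro additive_square_eq) auto
    then have "M' 1 2 = M' 2 1"
      using principal_reversible_squareD(5)[OF P(1)] principal_reversible_squareD(5)[OF P(2)]
      unfolding xy'(5) by (simp add: additive_square_transpose)
    moreover have inj: "inj_on (\<lambda>(i, j). M' i j) ({1..n} \<times> {1..n})"
      using inj_on_square_entries[OF principal_reversible_squareD(3)[OF P(2)]] .
    moreover have "(1, 2) \<in> {1..n} \<times> {1..n}" "(2, 1) \<in> {1..n} \<times> {1..n}" using two_le by auto
    ultimately have "(1::nat, 2::nat) = (2, 1)" using inj_onD[OF inj, of "(1, 2)" "(2, 1)"] by simp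
    then show ?thesis by simp
  qed
qed

lemma sds_of_principal_square:
  assumes "principal_reversible_square n M"
  obtains A B where "sds_of_square n s M = {A, B}"
    and "finite A" "finite B" "card A = n div 2" "card B = n div 2"
    and "\<forall>a\<in>A. 0 < a" "\<forall>b\<in>B. 0 < b" "P A B"
proof -
  obtain x y where xy: "strict_mono_on {1..n} x" "antipalindromic n x"
      "strict_mono_on {1..n} y" "antipalindromic n y" "M = additive_square n centre s x y"
    using principal_square_is_additive[OF assms] .
  define A B where "A = positive_values n x" and "B = positive_values n y"
  have pos: "\<forall>a\<in>A. 0 < a" "\<forall>b\<in>B. 0 < b" unfolding A_def B_def positive_values_def by auto
  have X: "signed_set n A = x ` {1..n}" and Y: "signed_set n B = y ` {1..n}"
    unfolding A_def B_def using antipalindromic_image_eq_signed_set xy by simp_all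
  have entries: "(\<lambda>w. centre + s * of_int w) ` (signed_set n A + signed_set n B) = real ` {1..n\<^sup>2}"
    using principal_reversible_squareD(3)[OF assms] unfolding xy(5) X Y
    by (simp add: square_entries_additive_square)
  have "inj_on (\<lambda>w. centre + s * of_int w) (x ` {1..n} + y ` {1..n})"
    using scale_pos by (intro inj_onI) simp
  then have "card (x ` {1..n} + y ` {1..n}) = card (real ` {1..n\<^sup>2})"
    using card_image entries unfolding X Y by metis
  also have "\<dots> = card (x ` {1..n}) * card (y ` {1..n})"
    using xy(1,3) by (simp add: card_image strict_mono_on_imp_inj_on power2_eq_square)
  finally have "inj_on (\<lambda>(u, v). u + v) (signed_set n A \<times> signed_set n B)"
    unfolding X Y by (intro inj_on_plus_if_card) auto
  then have "P A B" using sds_if_entries[OF pos entries] by blast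
  moreover have "sds_of_square n s M = {A, B}"
    unfolding A_def B_def xy(5) using scale_pos xy(2,4) by (simp add: sds_of_additive_square)
  moreover have "card A = n div 2" "card B = n div 2"
    unfolding A_def B_def using card_positive_values xy by blast+
  moreover have "finite A" "finite B" unfolding A_def B_def positive_values_def by simp_all
  ultimately show ?thesis using that pos by blast
qed

lemma principal_square_of_sds:
  assumes "finite A" "finite B" "card A = n div 2" "card B = n div 2"
    and "\<forall>a\<in>A. 0 < a" "\<forall>b\<in>B. 0 < b" "P A B"
  obtains M where "principal_reversible_square n M" "sds_of_square n s M = {A, B}"
proof -
  obtain x where x: "strict_mono_on {1..n} x" "antipalindromic n x" "positive_values n x = A"
    using exists_antipalindromic[OF assms(1,3,5)] .
  obtain y where y: "strict_mono_on {1..n} y" "antipalindromic n y" "positive_values n y = B"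
    using exists_antipalindromic[OF assms(2,4,6)] .
  have "x ` {1..n} = signed_set n A" "y ` {1..n} = signed_set n B"
    using antipalindromic_image_eq_signed_set x y by simp_all
  then have "(\<lambda>w. centre + s * of_int w) ` (x ` {1..n} + y ` {1..n}) = real ` {1..n\<^sup>2}"
    using entries_if_sds[OF assms(5-7)] by simp
  then have "principal_reversible_square n (additive_square n centre s x y) \<or>
      principal_reversible_square n (additive_square n centre s y x)"
    using principal_additive_square[OF x(1,2) y(1,2) scale_pos two_le] by blast
  moreover have "sds_of_square n s (additive_square n centre s x y) = {A, B}"
    "sds_of_square n s (additive_square n centre s y x) = {A, B}"
    using sds_of_additive_square[OF x(2) y(2)] sds_of_additive_square[OF y(2) x(2)] scale_pos x(3) y(3)
    by (simp_all add: insert_commute)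
  ultimately show ?thesis using that by blast
qed

lemma bij_betw_sds_of_square:
  "bij_betw (sds_of_square n s) {M. principal_reversible_square n M}
     {{A, B} | A B. finite A \<and> finite B \<and> card A = n div 2 \<and> card B = n div 2 \<and>
        (\<forall>a\<in>A. 0 < a) \<and> (\<forall>b\<in>B. 0 < b) \<and> P A B}"
  unfolding bij_betw_def
proof (intro conjI inj_on_sds_of_square equalityI subsetI)
  fix S assume "S \<in> sds_of_square n s ` {M. principal_reversible_square n M}"
  then obtain M where M: "principal_reversible_square n M" "S = sds_of_square n s M" by blast
  obtain A B where "S = {A, B}" "finite A" "finite B" "card A = n div 2" "card B = n div 2"
    "\<forall>a\<in>A. 0 < a" "\<forall>b\<in>B. 0 < b" "P A B"
    using sds_of_principal_square[OF M(1)] M(2) by metis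
  then show "S \<in> {{A, B} | A B. finite A \<and> finite B \<and> card A = n div 2 \<and> card B = n div 2 \<and>
        (\<forall>a\<in>A. 0 < a) \<and> (\<forall>b\<in>B. 0 < b) \<and> P A B}"
    by blast
next
  fix S assume "S \<in> {{A, B} | A B. finite A \<and> finite B \<and> card A = n div 2 \<and> card B = n div 2 \<and>
        (\<forall>a\<in>A. 0 < a) \<and> (\<forall>b\<in>B. 0 < b) \<and> P A B}"
  then obtain A B where AB: "S = {A, B}" "finite A" "finite B" "card A = n div 2" "card B = n div 2"
    "\<forall>a\<in>A. 0 < a" "\<forall>b\<in>B. 0 < b" "P A B" by blast
  obtain M where "principal_reversible_square n M" "sds_of_square n s M = {A, B}"
    using principal_square_of_sds[OF AB(2-8)] .
  then show "S \<in> sds_of_square n s ` {M. principal_reversible_square n M}"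
    using AB(1) by blast
qed

end

section \<open>Even and odd squares\<close>

lemma inj_affine_of_int:
  fixes s :: real
  assumes "s \<noteq> 0"
  shows "inj (\<lambda>w. c + s * of_int w)"
  using assms by (intro injI) simp

lemma affine_image_odd_integers:
  fixes m :: nat
  defines "N \<equiv> 4 * int m ^ 2"
  shows "(\<lambda>w. (real ((2 * m)\<^sup>2) + 1) / 2 + 1 / 2 * of_int w) ` {w. odd w \<and> \<bar>w\<bar> \<le> N - 1} =
    real ` {1..(2 * m)\<^sup>2}"
proof -
  have N: "int ((2 * m)\<^sup>2) = N" "real ((2 * m)\<^sup>2) = of_int N"
    unfolding N_def by (simp_all add: power_mult_distrib)
  have "real k \<in> (\<lambda>w. (of_int N + 1) / 2 + 1 / 2 * of_int w) ` {w. odd w \<and> \<bar>w\<bar> \<le> N - 1}"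
    if "k \<in> {1..(2 * m)\<^sup>2}" for k
  proof
    show "real k = (of_int N + 1) / 2 + 1 / 2 * of_int (2 * int k - N - 1)" by (simp add: field_simps)
    have "1 \<le> int k" "int k \<le> int ((2 * m)\<^sup>2)"
      using that by (simp_all only: of_nat_le_iff atLeastAtMost_iff) auto
    then have "1 \<le> int k" "int k \<le> N" unfolding N(1) .
    moreover have "even N" unfolding N_def by simp
    ultimately show "2 * int k - N - 1 \<in> {w. odd w \<and> \<bar>w\<bar> \<le> N - 1}" by auto
  qed
  moreover have "(of_int N + 1) / 2 + 1 / 2 * of_int w \<in> real ` {1..(2 * m)\<^sup>2}"
    if "odd w" "\<bar>w\<bar> \<le> N - 1" for w
  proof -
    obtain t where t: "w = 2 * t + 1" using \<open>odd w\<close> by (blast elim: oddE)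
    have "(of_int N + 1) / 2 + 1 / 2 * of_int w = real (nat (N div 2 + 1 + t))"
      using that unfolding t N_def by (simp add: field_simps)
    moreover have "1 \<le> N div 2 + 1 + t" "N div 2 + 1 + t \<le> N"
      using that unfolding t N_def by auto
    then have "nat (N div 2 + 1 + t) \<in> {1..(2 * m)\<^sup>2}"
      unfolding atLeastAtMost_iff nat_le_iff N(1) by linarith
    ultimately show ?thesis by blast
  qed
  ultimately show ?thesis unfolding N(2) by blast
qed

lemma affine_image_integer_interval:
  fixes m :: nat
  defines "K \<equiv> 2 * int m * (int m + 1)"
  shows "(\<lambda>w. (real ((2 * m + 1)\<^sup>2) + 1) / 2 + of_int w) ` {- K..K} = real ` {1..(2 * m + 1)\<^sup>2}"
proof -
  have N: "int ((2 * m + 1)\<^sup>2) = 2 * K + 1" "(real ((2 * m + 1)\<^sup>2) + 1) / 2 = of_int K + 1"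
    unfolding K_def by (simp_all add: power2_eq_square algebra_simps)
  have "real k \<in> (\<lambda>w. of_int K + 1 + of_int w) ` {- K..K}" if "k \<in> {1..(2 * m + 1)\<^sup>2}" for k
  proof
    show "real k = of_int K + 1 + of_int (int k - K - 1)" by simp
    have "1 \<le> int k" "int k \<le> int ((2 * m + 1)\<^sup>2)"
      using that by (simp_all only: of_nat_le_iff atLeastAtMost_iff) auto
    then show "int k - K - 1 \<in> {- K..K}" unfolding N(1) by simp
  qed
  moreover have "of_int K + 1 + of_int w \<in> real ` {1..(2 * m + 1)\<^sup>2}" if "w \<in> {- K..K}" for w
  proof
    show "of_int K + 1 + of_int w = real (nat (K + 1 + w))" using that by simp
    have "1 \<le> K + 1 + w" "K + 1 + w \<le> 2 * K + 1" using that by auto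
    then show "nat (K + 1 + w) \<in> {1..(2 * m + 1)\<^sup>2}"
      unfolding atLeastAtMost_iff nat_le_iff N(1) by linarith
  qed
  ultimately show ?thesis unfolding N(2) by blast
qed

lemma plus_minus_odd_interval:
  fixes N :: int
  shows "plus_minus {k. odd k \<and> 1 \<le> k \<and> k \<le> N - 1} = {w. odd w \<and> \<bar>w\<bar> \<le> N - 1}"
proof (intro set_eqI iffI)
  fix w assume w: "w \<in> {w. odd w \<and> \<bar>w\<bar> \<le> N - 1}"
  then have "w \<noteq> 0" by auto
  with w have "\<bar>w\<bar> \<in> {k. odd k \<and> 1 \<le> k \<and> k \<le> N - 1}" "w = \<bar>w\<bar> \<or> w = - \<bar>w\<bar>"
    by (auto simp: abs_if)
  then show "w \<in> plus_minus {k. odd k \<and> 1 \<le> k \<and> k \<le> N - 1}" unfolding plus_minus_iff by blast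
qed (auto simp: plus_minus_iff)

lemma plus_minus_interval:
  fixes K :: int
  assumes "0 \<le> K"
  shows "plus_minus {1..K} \<union> {0} = {- K..K}"
proof (intro set_eqI iffI)
  fix w assume "w \<in> {- K..K}"
  then have "w = 0 \<or> (\<bar>w\<bar> \<in> {1..K} \<and> (w = \<bar>w\<bar> \<or> w = - \<bar>w\<bar>))" by (auto simp: abs_if)
  then show "w \<in> plus_minus {1..K} \<union> {0}" unfolding Un_iff plus_minus_iff by blast
qed (use assms in \<open>auto simp: plus_minus_iff\<close>)

lemma non_inclusive_entries_iff:
  fixes m :: nat and A B :: "int set"
  assumes "\<forall>a\<in>A. 0 < a" "\<forall>b\<in>B. 0 < b"
  defines "T \<equiv> {k. odd k \<and> 1 \<le> k \<and> k \<le> 4 * int m ^ 2 - 1}"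
  shows "(\<lambda>w. (real ((2 * m)\<^sup>2) + 1) / 2 + 1 / 2 * of_int w) `
      (signed_set (2 * m) A + signed_set (2 * m) B) = real ` {1..(2 * m)\<^sup>2} \<longleftrightarrow>
    sums_and_distances A B = T"
proof -
  let ?f = "\<lambda>w. (real ((2 * m)\<^sup>2) + 1) / 2 + 1 / 2 * of_int w"
  have inj: "inj ?f" by (rule inj_affine_of_int) simp
  have "signed_set (2 * m) A + signed_set (2 * m) B = plus_minus (sums_and_distances A B)"
    by (simp add: signed_set_def set_plus_plus_minus)
  then have "?f ` (signed_set (2 * m) A + signed_set (2 * m) B) = real ` {1..(2 * m)\<^sup>2} \<longleftrightarrow>
      ?f ` plus_minus (sums_and_distances A B) = ?f ` plus_minus T"
    unfolding T_def plus_minus_odd_interval affine_image_odd_integers by simp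
  also have "\<dots> \<longleftrightarrow> plus_minus (sums_and_distances A B) = plus_minus T"
    by (rule inj_image_eq_iff[OF inj])
  also have "\<dots> \<longleftrightarrow> sums_and_distances A B = T"
  proof
    assume eq: "plus_minus (sums_and_distances A B) = plus_minus T"
    have "0 \<notin> plus_minus T" unfolding T_def plus_minus_odd_interval by simp
    then have "0 \<notin> plus_minus (sums_and_distances A B)" using eq by simp
    then have "0 \<notin> sums_and_distances A B" by (simp add: plus_minus_def)
    then have "\<forall>v\<in>sums_and_distances A B. 0 < v"
      using sums_and_distances_nonneg[OF assms(1,2)] by (metis order.not_eq_order_implies_strict)
    moreover have "\<forall>v\<in>T. 0 < v" unfolding T_def by simp
    ultimately show "sums_and_distances A B = T"
      using plus_minus_cancel[of _ _ "{}"] eq by (metis Un_empty_right empty_subsetI)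
  qed simp
  finally show ?thesis .
qed

lemma disjoint_if_inj_on_plus:
  fixes A B :: "int set"
  assumes "odd n" "inj_on (\<lambda>(u, v). u + v) (signed_set n A \<times> signed_set n B)" "\<forall>a\<in>A. 0 < a"
  shows "A \<inter> B = {}"
proof (rule ccontr)
  assume "A \<inter> B \<noteq> {}"
  then obtain a where a: "a \<in> A" "a \<in> B" by blast
  then have "(a, - a) \<in> signed_set n A \<times> signed_set n B" "(0, 0) \<in> signed_set n A \<times> signed_set n B"
    using assms(1) by (auto simp: signed_set_def plus_minus_def)
  then have "(a, - a) = (0, 0)" using inj_onD[OF assms(2), of "(a, - a)" "(0, 0)"] by simp
  then show False using assms(3) a by auto
qed

lemma disjoint_if_zero_notin_sums_and_distances:
  assumes "0 \<notin> sums_and_distances A B"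
  shows "A \<inter> B = {}"
  using assms unfolding sums_and_distances_def by force

lemma inclusive_entries_iff:
  fixes m :: nat and A B :: "int set"
  assumes "\<forall>a\<in>A. 0 < a" "\<forall>b\<in>B. 0 < b" "A \<inter> B = {}"
  defines "K \<equiv> 2 * int m * (int m + 1)"
  shows "(\<lambda>w. (real ((2 * m + 1)\<^sup>2) + 1) / 2 + of_int w) `
      (signed_set (2 * m + 1) A + signed_set (2 * m + 1) B) = real ` {1..(2 * m + 1)\<^sup>2} \<longleftrightarrow>
    A \<union> B \<union> sums_and_distances A B = {1..K}"
proof -
  let ?f = "\<lambda>w. (real ((2 * m + 1)\<^sup>2) + 1) / 2 + of_int w"
  let ?U = "A \<union> B \<union> sums_and_distances A B"
  have inj: "inj ?f" using inj_affine_of_int[of 1] by simp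
  have "signed_set (2 * m + 1) X = plus_minus X \<union> {0}" for X
    by (simp add: signed_set_def)
  then have signed: "signed_set (2 * m + 1) A + signed_set (2 * m + 1) B = plus_minus ?U \<union> {0}"
    by (simp only: set_plus_plus_minus_zero)
  have "0 \<le> K" unfolding K_def by simp
  have "?f ` {- K..K} = real ` {1..(2 * m + 1)\<^sup>2}"
    unfolding K_def by (rule affine_image_integer_interval)
  then have target: "real ` {1..(2 * m + 1)\<^sup>2} = ?f ` (plus_minus {1..K} \<union> {0})"
    by (simp only: plus_minus_interval[OF \<open>0 \<le> K\<close>])
  have "?f ` (signed_set (2 * m + 1) A + signed_set (2 * m + 1) B) = real ` {1..(2 * m + 1)\<^sup>2} \<longleftrightarrow>
      plus_minus ?U \<union> {0} = plus_minus {1..K} \<union> {0}"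
    unfolding signed target by (rule inj_image_eq_iff[OF inj])
  also have "\<dots> \<longleftrightarrow> ?U = {1..K}"
  proof
    have "a - b \<noteq> 0" if "a \<in> A" "b \<in> B" for a b using that assms(3) by auto
    then have "\<forall>v\<in>sums_and_distances A B. 0 < v"
      using assms(1,2) unfolding sums_and_distances_def by (auto intro: add_pos_pos)
    then have "\<forall>v\<in>?U. 0 < v" using assms(1,2) by blast
    then show "?U = {1..K}" if "plus_minus ?U \<union> {0} = plus_minus {1..K} \<union> {0}"
      by (rule plus_minus_cancel[OF _ _ _ that]) auto
  qed simp
  finally show ?thesis .
qed

lemma principal_square_half_difference_integral:
  assumes "principal_reversible_square n M" "odd n" "i \<in> {1..n}"
  shows "(M i 1 - M (n + 1 - i) 1) / 2 \<in> \<int> \<and> (M 1 i - M 1 (n + 1 - i)) / 2 \<in> \<int>"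
proof -
  have one: "1 \<in> {1..n}" and centre: "n div 2 + 1 \<in> {1..n}"
    using assms(2,3) by (auto elim: oddE)
  note half = reversible_square_odd_centre[OF principal_reversible_squareD(1)[OF assms(1)] assms(2,3) one]
  have "M i 1 - M (n div 2 + 1) 1 \<in> \<int>" "M 1 i - M 1 (n div 2 + 1) \<in> \<int>"
    using principal_square_entry_integral[OF assms(1)] assms(3) one centre by (simp_all add: Ints_diff)
  then show ?thesis unfolding half by (metis nonzero_mult_div_cancel_left zero_neq_numeral)
qed

lemma bij_betw_sds_of_square_non_inclusive:
  assumes "1 \<le> m"
  shows "bij_betw (sds_of_square (2 * m) (1 / 2)) {M. principal_reversible_square (2 * m) M}
    {S. non_incl_sds m S}"
proof -
  define T where "T = {k. odd k \<and> 1 \<le> k \<and> k \<le> 4 * int m ^ 2 - 1}"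
  interpret sds_square_correspondence "2 * m" "1 / 2" "\<lambda>A B. sums_and_distances A B = T"
  proof
    show "2 \<le> 2 * m" using assms by simp
    show "0 < (1 / 2 :: real)" by simp
  next
    fix M i assume M: "principal_reversible_square (2 * m) M" and i: "i \<in> {1..2 * m}"
    then have "1 \<in> {1..2 * m}" "2 * m + 1 - i \<in> {1..2 * m}" by auto
    then show "(M i 1 - M (2 * m + 1 - i) 1) / (2 * (1 / 2)) \<in> \<int> \<and>
        (M 1 i - M 1 (2 * m + 1 - i)) / (2 * (1 / 2)) \<in> \<int>"
      using principal_square_entry_integral[OF M] i by (simp add: Ints_diff)
  next
    fix A B :: "int set"
    assume pos: "\<forall>a\<in>A. 0 < a" "\<forall>b\<in>B. 0 < b"
    note entries_iff = non_inclusive_entries_iff[where m = m, OF pos, folded T_def]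
    show "(\<lambda>w. (real ((2 * m)\<^sup>2) + 1) / 2 + 1 / 2 * of_int w) `
        (signed_set (2 * m) A + signed_set (2 * m) B) = real ` {1..(2 * m)\<^sup>2}"
      if "sums_and_distances A B = T"
      unfolding entries_iff by (rule that)
    show "sums_and_distances A B = T"
      if "(\<lambda>w. (real ((2 * m)\<^sup>2) + 1) / 2 + 1 / 2 * of_int w) `
        (signed_set (2 * m) A + signed_set (2 * m) B) = real ` {1..(2 * m)\<^sup>2}"
      using that(1) unfolding entries_iff .
  qed
  have "{S. non_incl_sds m S} = {{A, B} | A B. finite A \<and> finite B \<and> card A = 2 * m div 2 \<and>
      card B = 2 * m div 2 \<and> (\<forall>a\<in>A. 0 < a) \<and> (\<forall>b\<in>B. 0 < b) \<and> sums_and_distances A B = T}"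
    unfolding non_incl_sds_def sums_and_distances_def T_def by simp
  then show ?thesis using bij_betw_sds_of_square by simp
qed

lemma bij_betw_sds_of_square_inclusive:
  assumes "1 \<le> m"
  shows "bij_betw (sds_of_square (2 * m + 1) 1) {M. principal_reversible_square (2 * m + 1) M}
    {S. incl_sds m S}"
proof -
  define K where "K = 2 * int m * (int m + 1)"
  interpret sds_square_correspondence "2 * m + 1" 1
    "\<lambda>A B. A \<union> B \<union> sums_and_distances A B = {1..K}"
  proof
    show "2 \<le> 2 * m + 1" using assms by simp
    show "0 < (1 :: real)" by simp
  next
    fix M i assume "principal_reversible_square (2 * m + 1) M" "i \<in> {1..2 * m + 1}"
    then show "(M i 1 - M (2 * m + 1 + 1 - i) 1) / (2 * 1) \<in> \<int> \<and>
        (M 1 i - M 1 (2 * m + 1 + 1 - i)) / (2 * 1) \<in> \<int>"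
      using principal_square_half_difference_integral by simp
  next
    fix A B :: "int set"
    assume pos: "\<forall>a\<in>A. 0 < a" "\<forall>b\<in>B. 0 < b"
    have affine: "(\<lambda>w. (real ((2 * m + 1)\<^sup>2) + 1) / 2 + 1 * of_int w) =
        (\<lambda>w. (real ((2 * m + 1)\<^sup>2) + 1) / 2 + of_int w)"
      by simp
    note entries_iff = inclusive_entries_iff[where m = m, OF pos, folded K_def]
    show "(\<lambda>w. (real ((2 * m + 1)\<^sup>2) + 1) / 2 + 1 * of_int w) `
        (signed_set (2 * m + 1) A + signed_set (2 * m + 1) B) = real ` {1..(2 * m + 1)\<^sup>2}"
      if sds: "A \<union> B \<union> sums_and_distances A B = {1..K}"
    proof -
      have "0 \<notin> A \<union> B \<union> sums_and_distances A B" using sds by simp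
      then have "A \<inter> B = {}" by (intro disjoint_if_zero_notin_sums_and_distances) blast
      show ?thesis unfolding affine entries_iff[OF \<open>A \<inter> B = {}\<close>] by (rule sds)
    qed
    show "A \<union> B \<union> sums_and_distances A B = {1..K}"
      if entries: "(\<lambda>w. (real ((2 * m + 1)\<^sup>2) + 1) / 2 + 1 * of_int w) `
          (signed_set (2 * m + 1) A + signed_set (2 * m + 1) B) = real ` {1..(2 * m + 1)\<^sup>2}"
        and "inj_on (\<lambda>(u, v). u + v) (signed_set (2 * m + 1) A \<times> signed_set (2 * m + 1) B)"
    proof -
      have "A \<inter> B = {}" by (rule disjoint_if_inj_on_plus[OF _ that(2) pos(1)]) simp
      show ?thesis using entries unfolding affine entries_iff[OF \<open>A \<inter> B = {}\<close>] .
    qed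
  qed
  have "{S. incl_sds m S} = {{A, B} | A B. finite A \<and> finite B \<and> card A = (2 * m + 1) div 2 \<and>
      card B = (2 * m + 1) div 2 \<and> (\<forall>a\<in>A. 0 < a) \<and> (\<forall>b\<in>B. 0 < b) \<and>
      A \<union> B \<union> sums_and_distances A B = {1..K}}"
    unfolding incl_sds_def sums_and_distances_def K_def by (simp add: Un_assoc)
  then show ?thesis using bij_betw_sds_of_square by simp
qed

theorem theorem5:
  fixes m :: nat
  assumes "m \<ge> 1"
  shows "(\<exists>f. bij_betw f {S. non_incl_sds m S} {M. principal_reversible_square (2 * m) M}) \<and>
         (\<exists>g. bij_betw g {S. incl_sds m S} {M. principal_reversible_square (2 * m + 1) M})"
  using bij_betw_inv_into[OF bij_betw_sds_of_square_non_inclusive[OF assms]]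
    bij_betw_inv_into[OF bij_betw_sds_of_square_inclusive[OF assms]]
  by blast

end
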